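(* Let $\mathfrak l$ be a real finite-dimensional nilpotent Lie algebra with $\dim\mathfrak l'=2$ and $\mathfrak l'\subset\mathfrak z(\mathfrak l)$ which is admissible, and let $\bar{\mathfrak l}\subset\mathfrak l$ be a 3-dimensional subspace with $[\bar{\mathfrak l},\bar{\mathfrak l}]=\mathfrak l'$. Then $[L_1,L_2]=0$ for all $L_1,L_2\in\mathfrak l$ satisfying $[L_1,\bar{\mathfrak l}]=[L_2,\bar{\mathfrak l}]=0$.
   Context: For a Lie algebra $\mathfrak l$: $\mathfrak l^1=\mathfrak l$, $\mathfrak l^{k+1}=[\mathfrak l,\mathfrak l^k]$, $\mathfrak l'=\mathfrak l^2$, $\mathfrak z(\mathfrak l)$ the centre. An orthogonal $\mathfrak l$-module $(\rho,\mathfrak a)$ is a finite-dimensional real vector space with a nondegenerate symmetric bilinear form $\langle\cdot,\cdot\rangle_{\mathfrak a}$ and a representation by skew-adjoint maps. $C^p(\mathfrak l,\mathfrak a)$: alternating $p$-linear maps with Chevalley–Eilenberg differential $d$; $C^p(\mathfrak l)=C^p(\mathfrak l,\mathbb R)$; $\langle\alpha\wedge\beta\rangle$ is the wedge product followed by contraction with $\langle\cdot,\cdot\rangle_{\mathfrak a}$. $\mathcal Z^2_Q(\mathfrak l,\mathfrak a)=\{(\alpha,\gamma)\in C^2(\mathfrak l,\mathfrak a)\oplus C^3(\mathfrak l): d\alpha=0,d\gamma=\frac12\langle\alpha\wedge\alpha\rangle\}$; the group $C^1(\mathfrak l,\mathfrak a)\oplus C^2(\mathfrak l)$ with $(\tau_1,\sigma_1)*(\tau_2,\sigma_2)=(\tau_1+\tau_2,\sigma_1+\sigma_2+\frac12\langle\tau_1\wedge\tau_2\rangle)$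 acts by $(\alpha,\gamma)(\tau,\sigma)=(\alpha+d\tau,\gamma+d\sigma+\langle(\alpha+\frac12d\tau)\wedge\tau\rangle)$; $\mathcal H^2_Q(\mathfrak l,\mathfrak a)$ is the orbit set. Admissibility: for nilpotent $\mathfrak l$ and semisimple $(\rho,\mathfrak a)$, with $\mathfrak l^{m+2}=0$, $\mathfrak l_{(0)}=\mathfrak z(\mathfrak l)\cap\ker\rho$, $\mathfrak l_{(k)}=\mathfrak z(\mathfrak l)\cap\mathfrak l^{k+1}$ ($k\ge1$), and a representative with $\alpha(\mathfrak l,\mathfrak l)\subset\mathfrak a^{\mathfrak l}$, a class is admissible iff for all $0\le k\le m$: $(A_k)$ whenever $L_0\in\mathfrak l_{(k)}$ and there are $A_0\in\mathfrak a$, $Z_0\in(\mathfrak l^{k+1})^*$ with $\alpha(L,L_0)=0$ and $\gamma(L,L_0,\cdot)=-\langle A_0,\alpha(L,\cdot)\rangle_{\mathfrak a}+\langle Z_0,[L,\cdot]\rangle$ on $\mathfrak l^{k+1}$ for all $L$, then $L_0=0$; $(B_k)$ $\alpha$ applied to the kernel of the bracket map $\mathfrak l\otimes\mathfrak l^{k+1}\to\mathfrak l$ is a nondegenerate subspace of $\mathfrak a$. $\mathfrak l$ is admissible if some semisimple orthogonal module $\mathfrak a$ admits an admissible class in $\mathcal H^2_Q(\mathfrak l,\mathfrak a)$. *)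

theory Defs
  imports "HOL-Analysis.Analysis"
begin

definition bilin :: "('a::real_vector \<Rightarrow> 'a \<Rightarrow> 'b::real_vector) \<Rightarrow> bool" where
  "bilin f \<longleftrightarrow> (\<forall>x. linear (\<lambda>y. f x y)) \<and> (\<forall>y. linear (\<lambda>x. f x y))"

definition lie_algebra :: "('l::real_vector \<Rightarrow> 'l \<Rightarrow> 'l) \<Rightarrow> bool" where
  "lie_algebra br \<longleftrightarrow> bilin br \<and> (\<forall>x. br x x = 0) \<and>
     (\<forall>x y z. br x (br y z) + br y (br z x) + br z (br x y) = 0)"

text \<open>Lower central series, indexed as in the paper: lcs br 1 = l, lcs br (k+1) = [l, lcs br k].
  (The index 0 is not used; it is set to l as well.)\<close>
fun lcs :: "('l::real_vector \<Rightarrow> 'l \<Rightarrow> 'l) \<Rightarrow> nat \<Rightarrow> 'l set" where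
  "lcs br 0 = UNIV"
| "lcs br (Suc 0) = UNIV"
| "lcs br (Suc (Suc k)) = span {br x y | x y. y \<in> lcs br (Suc k)}"

definition lie_center :: "('l::real_vector \<Rightarrow> 'l \<Rightarrow> 'l) \<Rightarrow> 'l set" where
  "lie_center br = {z. \<forall>x. br x z = 0}"

definition lie_nilpotent :: "('l::real_vector \<Rightarrow> 'l \<Rightarrow> 'l) \<Rightarrow> bool" where
  "lie_nilpotent br \<longleftrightarrow> (\<exists>m. lcs br m = {0})"

text \<open>A finite-dimensional real vector space a is identified with R^n, whose elements are
  represented by functions v :: nat => real vanishing from index n on.\<close>

definition vsp :: "nat \<Rightarrow> (nat \<Rightarrow> real) set" where
  "vsp n = {v. \<forall>i\<ge>n. v i = 0}"

definition vzero :: "nat \<Rightarrow> real" where "vzero = (\<lambda>_. 0)"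

definition fsubspace :: "(nat \<Rightarrow> real) set \<Rightarrow> bool" where
  "fsubspace U \<longleftrightarrow> vzero \<in> U \<and> (\<forall>u\<in>U. \<forall>v\<in>U. (\<lambda>i. u i + v i) \<in> U) \<and>
     (\<forall>c. \<forall>u\<in>U. (\<lambda>i. c * u i) \<in> U)"

definition bform :: "nat \<Rightarrow> (nat \<Rightarrow> nat \<Rightarrow> real) \<Rightarrow> (nat \<Rightarrow> real) \<Rightarrow> (nat \<Rightarrow> real) \<Rightarrow> real" where
  "bform n Q v w = (\<Sum>i<n. \<Sum>j<n. v i * Q i j * w j)"

definition act :: "nat \<Rightarrow> ('l \<Rightarrow> nat \<Rightarrow> nat \<Rightarrow> real) \<Rightarrow> 'l \<Rightarrow> (nat \<Rightarrow> real) \<Rightarrow> (nat \<Rightarrow> real)" where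
  "act n R L v = (\<lambda>i. if i < n then (\<Sum>j<n. R L i j * v j) else 0)"

definition orth_module :: "('l::real_vector \<Rightarrow> 'l \<Rightarrow> 'l) \<Rightarrow> nat \<Rightarrow> (nat \<Rightarrow> nat \<Rightarrow> real)
    \<Rightarrow> ('l \<Rightarrow> nat \<Rightarrow> nat \<Rightarrow> real) \<Rightarrow> bool" where
  "orth_module br n Q R \<longleftrightarrow>
     (\<forall>i<n. \<forall>j<n. Q i j = Q j i) \<and>
     (\<forall>v\<in>vsp n. (\<forall>w\<in>vsp n. bform n Q v w = 0) \<longrightarrow> v = vzero) \<and>
     (\<forall>i<n. \<forall>j<n. linear (\<lambda>L. R L i j)) \<and>
     (\<forall>X Y. \<forall>v\<in>vsp n. act n R (br X Y) v =
         (\<lambda>i. act n R X (act n R Y v) i - act n R Y (act n R X v) i)) \<and>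
     (\<forall>L. \<forall>v\<in>vsp n. \<forall>w\<in>vsp n. bform n Q (act n R L v) w + bform n Q v (act n R L w) = 0)"

definition invariant_sub :: "nat \<Rightarrow> ('l \<Rightarrow> nat \<Rightarrow> nat \<Rightarrow> real) \<Rightarrow> (nat \<Rightarrow> real) set \<Rightarrow> bool" where
  "invariant_sub n R U \<longleftrightarrow> fsubspace U \<and> U \<subseteq> vsp n \<and> (\<forall>L. \<forall>u\<in>U. act n R L u \<in> U)"

text \<open>Semisimple = completely reducible: every invariant subspace has an invariant complement.\<close>
definition semisimple_module :: "nat \<Rightarrow> ('l \<Rightarrow> nat \<Rightarrow> nat \<Rightarrow> real) \<Rightarrow> bool" where
  "semisimple_module n R \<longleftrightarrow> (\<forall>U. invariant_sub n R U \<longrightarrow>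
     (\<exists>W. invariant_sub n R W \<and> U \<inter> W = {vzero} \<and>
          (\<forall>v\<in>vsp n. \<exists>u\<in>U. \<exists>w\<in>W. v = (\<lambda>i. u i + w i))))"

definition mod_invariants :: "nat \<Rightarrow> ('l \<Rightarrow> nat \<Rightarrow> nat \<Rightarrow> real) \<Rightarrow> (nat \<Rightarrow> real) set" where
  "mod_invariants n R = {A \<in> vsp n. \<forall>L. act n R L A = vzero}"

definition rho_kernel :: "nat \<Rightarrow> ('l \<Rightarrow> nat \<Rightarrow> nat \<Rightarrow> real) \<Rightarrow> 'l set" where
  "rho_kernel n R = {L. \<forall>v\<in>vsp n. act n R L v = vzero}"

definition cochain2 :: "nat \<Rightarrow> ('l::real_vector \<Rightarrow> 'l \<Rightarrow> nat \<Rightarrow> real) \<Rightarrow> bool" where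
  "cochain2 n \<alpha> \<longleftrightarrow> (\<forall>X Y. \<alpha> X Y \<in> vsp n) \<and> (\<forall>i. bilin (\<lambda>X Y. \<alpha> X Y i)) \<and>
     (\<forall>X. \<alpha> X X = vzero)"

definition cochain3 :: "('l::real_vector \<Rightarrow> 'l \<Rightarrow> 'l \<Rightarrow> real) \<Rightarrow> bool" where
  "cochain3 \<gamma> \<longleftrightarrow> (\<forall>Y Z. linear (\<lambda>X. \<gamma> X Y Z)) \<and> (\<forall>X Z. linear (\<lambda>Y. \<gamma> X Y Z)) \<and>
     (\<forall>X Y. linear (\<lambda>Z. \<gamma> X Y Z)) \<and>
     (\<forall>X Z. \<gamma> X X Z = 0) \<and> (\<forall>X Y. \<gamma> X Y Y = 0) \<and> (\<forall>X Y. \<gamma> X Y X = 0)"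

text \<open>Chevalley-Eilenberg differential of a 2-cochain with values in (rho,a).\<close>
definition d2 :: "('l \<Rightarrow> 'l \<Rightarrow> 'l) \<Rightarrow> nat \<Rightarrow> ('l \<Rightarrow> nat \<Rightarrow> nat \<Rightarrow> real) \<Rightarrow> ('l \<Rightarrow> 'l \<Rightarrow> nat \<Rightarrow> real)
    \<Rightarrow> 'l \<Rightarrow> 'l \<Rightarrow> 'l \<Rightarrow> nat \<Rightarrow> real" where
  "d2 br n R \<alpha> X Y Z = (\<lambda>i. act n R X (\<alpha> Y Z) i - act n R Y (\<alpha> X Z) i + act n R Z (\<alpha> X Y) i
      - \<alpha> (br X Y) Z i + \<alpha> (br X Z) Y i - \<alpha> (br Y Z) X i)"

text \<open>Chevalley-Eilenberg differential of a real 3-cochain (trivial module).\<close>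
definition d3 :: "('l \<Rightarrow> 'l \<Rightarrow> 'l) \<Rightarrow> ('l \<Rightarrow> 'l \<Rightarrow> 'l \<Rightarrow> real) \<Rightarrow> 'l \<Rightarrow> 'l \<Rightarrow> 'l \<Rightarrow> 'l \<Rightarrow> real" where
  "d3 br \<gamma> X0 X1 X2 X3 =
     - \<gamma> (br X0 X1) X2 X3 + \<gamma> (br X0 X2) X1 X3 - \<gamma> (br X0 X3) X1 X2
     - \<gamma> (br X1 X2) X0 X3 + \<gamma> (br X1 X3) X0 X2 - \<gamma> (br X2 X3) X0 X1"

text \<open>The 4-form \<langle>alpha \<and> beta\<rangle> (wedge with the shuffle convention, then contraction with the form).\<close>
definition wedge22 :: "nat \<Rightarrow> (nat \<Rightarrow> nat \<Rightarrow> real) \<Rightarrow> ('l \<Rightarrow> 'l \<Rightarrow> nat \<Rightarrow> real) \<Rightarrow> ('l \<Rightarrow> 'l \<Rightarrow> nat \<Rightarrow> real)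
    \<Rightarrow> 'l \<Rightarrow> 'l \<Rightarrow> 'l \<Rightarrow> 'l \<Rightarrow> real" where
  "wedge22 n Q \<alpha> \<beta> X0 X1 X2 X3 =
       bform n Q (\<alpha> X0 X1) (\<beta> X2 X3) - bform n Q (\<alpha> X0 X2) (\<beta> X1 X3)
     + bform n Q (\<alpha> X0 X3) (\<beta> X1 X2) + bform n Q (\<alpha> X1 X2) (\<beta> X0 X3)
     - bform n Q (\<alpha> X1 X3) (\<beta> X0 X2) + bform n Q (\<alpha> X2 X3) (\<beta> X0 X1)"

definition quad_cocycle :: "('l::real_vector \<Rightarrow> 'l \<Rightarrow> 'l) \<Rightarrow> nat \<Rightarrow> (nat \<Rightarrow> nat \<Rightarrow> real)
    \<Rightarrow> ('l \<Rightarrow> nat \<Rightarrow> nat \<Rightarrow> real) \<Rightarrow> ('l \<Rightarrow> 'l \<Rightarrow> nat \<Rightarrow> real) \<Rightarrow> ('l \<Rightarrow> 'l \<Rightarrow> 'l \<Rightarrow> real) \<Rightarrow> bool" where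
  "quad_cocycle br n Q R \<alpha> \<gamma> \<longleftrightarrow> cochain2 n \<alpha> \<and> cochain3 \<gamma> \<and>
     (\<forall>X Y Z. d2 br n R \<alpha> X Y Z = vzero) \<and>
     (\<forall>X0 X1 X2 X3. d3 br \<gamma> X0 X1 X2 X3 = (1/2) * wedge22 n Q \<alpha> \<alpha> X0 X1 X2 X3)"

definition lin_on :: "'l::real_vector set \<Rightarrow> ('l \<Rightarrow> real) \<Rightarrow> bool" where
  "lin_on W f \<longleftrightarrow> (\<forall>x\<in>W. \<forall>y\<in>W. f (x + y) = f x + f y) \<and> (\<forall>c. \<forall>x\<in>W. f (c *\<^sub>R x) = c * f x)"

definition lsub :: "('l::real_vector \<Rightarrow> 'l \<Rightarrow> 'l) \<Rightarrow> nat \<Rightarrow> ('l \<Rightarrow> nat \<Rightarrow> nat \<Rightarrow> real) \<Rightarrow> nat \<Rightarrow> 'l set" where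
  "lsub br n R k = (if k = 0 then lie_center br \<inter> rho_kernel n R
                    else lie_center br \<inter> lcs br (k + 1))"

definition cond_A :: "('l::real_vector \<Rightarrow> 'l \<Rightarrow> 'l) \<Rightarrow> nat \<Rightarrow> (nat \<Rightarrow> nat \<Rightarrow> real)
    \<Rightarrow> ('l \<Rightarrow> nat \<Rightarrow> nat \<Rightarrow> real) \<Rightarrow> ('l \<Rightarrow> 'l \<Rightarrow> nat \<Rightarrow> real) \<Rightarrow> ('l \<Rightarrow> 'l \<Rightarrow> 'l \<Rightarrow> real) \<Rightarrow> nat \<Rightarrow> bool" where
  "cond_A br n Q R \<alpha> \<gamma> k \<longleftrightarrow>
     (\<forall>L0 \<in> lsub br n R k.
        (\<exists>A0 \<in> vsp n. \<exists>Z0. lin_on (lcs br (k + 1)) Z0 \<and>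
            (\<forall>L. \<alpha> L L0 = vzero) \<and>
            (\<forall>L. \<forall>X \<in> lcs br (k + 1).
                \<gamma> L L0 X = - bform n Q A0 (\<alpha> L X) + Z0 (br L X)))
        \<longrightarrow> L0 = 0)"

text \<open>alpha applied to the kernel of the bracket map l \<otimes> l^(k+1) -> l; elements of the
  tensor product are written as finite sums of elementary tensors.\<close>
definition alpha_ker :: "('l::real_vector \<Rightarrow> 'l \<Rightarrow> 'l) \<Rightarrow> ('l \<Rightarrow> 'l \<Rightarrow> nat \<Rightarrow> real) \<Rightarrow> nat \<Rightarrow> (nat \<Rightarrow> real) set" where
  "alpha_ker br \<alpha> k = {(\<lambda>i. \<Sum>j<m. \<alpha> (x j) (w j) i) | (m::nat) (x::nat \<Rightarrow> 'l) (w::nat \<Rightarrow> 'l).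
       (\<forall>j<m. w j \<in> lcs br (k + 1)) \<and> (\<Sum>j<m. br (x j) (w j)) = 0}"

definition nondeg_sub :: "nat \<Rightarrow> (nat \<Rightarrow> nat \<Rightarrow> real) \<Rightarrow> (nat \<Rightarrow> real) set \<Rightarrow> bool" where
  "nondeg_sub n Q S \<longleftrightarrow> (\<forall>s\<in>S. (\<forall>t\<in>S. bform n Q s t = 0) \<longrightarrow> s = vzero)"

definition cond_B :: "('l::real_vector \<Rightarrow> 'l \<Rightarrow> 'l) \<Rightarrow> nat \<Rightarrow> (nat \<Rightarrow> nat \<Rightarrow> real)
    \<Rightarrow> ('l \<Rightarrow> 'l \<Rightarrow> nat \<Rightarrow> real) \<Rightarrow> nat \<Rightarrow> bool" where
  "cond_B br n Q \<alpha> k \<longleftrightarrow> nondeg_sub n Q (alpha_ker br \<alpha> k)"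

text \<open>l is admissible: some semisimple orthogonal module a admits a class in H^2_Q(l,a) having a
  representative (alpha,gamma) with alpha(l,l) \<subseteq> a^l satisfying (A_k),(B_k) for 0 \<le> k \<le> m,
  where l^(m+2) = 0 (for larger k both conditions hold trivially, so all k are required).\<close>
definition lie_admissible :: "('l::real_vector \<Rightarrow> 'l \<Rightarrow> 'l) \<Rightarrow> bool" where
  "lie_admissible br \<longleftrightarrow>
     (\<exists>n Q R \<alpha> \<gamma>. orth_module br n Q R \<and> semisimple_module n R \<and>
        quad_cocycle br n Q R \<alpha> \<gamma> \<and>
        (\<forall>X Y. \<alpha> X Y \<in> mod_invariants n R) \<and>
        (\<forall>m. lcs br (m + 2) = {0} \<longrightarrow> (\<forall>k\<le>m. cond_A br n Q R \<alpha> \<gamma> k \<and> cond_B br n Q \<alpha> k)))"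

end

theory Submission
  imports Defs
begin

text \<open>Let L0 = [L1, L2], which is central because l' is. Since \<alpha> takes invariant values,
  d\<alpha> = 0 makes \<alpha> a 2-cocycle with trivial coefficients; as [Lbar, Lbar] spans l', this gives
  \<alpha>(l', L1) = \<alpha>(l', L2) = 0 and hence \<alpha>(l, L0) = 0. Evaluating d\<gamma> = 1/2 \<langle>\<alpha> \<and> \<alpha>\<rangle> at
  (L1, L2, x, W) and at (x, y, L, L0) for x, y \<in> Lbar and W \<in> l' yields
  \<gamma>(L, L0, X) = \<langle>\<alpha>(L1, L2), \<alpha>(L, X)\<rangle> for all X \<in> l'. Thus L0 \<in> l_(1) satisfies the hypotheses
  of (A_1) with A0 = -\<alpha>(L1, L2) and Z0 = 0, so L0 = 0.\<close>

lemma bilin_antisym: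
  assumes "bilin f" "\<And>x. f x x = 0"
  shows "f x y = - f y x"
proof -
  have l: "linear (\<lambda>y. f z y)" "linear (\<lambda>x. f x z)" for z
    using assms(1) unfolding bilin_def by blast+
  have "0 = f (x + y) (x + y)" using assms(2) by simp
  also have "\<dots> = f x x + f x y + (f y x + f y y)"
    using linear_add[OF l(1)] linear_add[OF l(2)] by simp
  also have "\<dots> = f x y + f y x" using assms(2) by simp
  finally show ?thesis by (simp add: eq_neg_iff_add_eq_0)
qed

lemma cochain3_swap12:
  assumes "cochain3 \<gamma>"
  shows "\<gamma> X Y Z = - \<gamma> Y X Z"
  using assms by (intro bilin_antisym[of "\<lambda>X Y. \<gamma> X Y Z"]) (auto simp: cochain3_def bilin_def)

lemma cochain3_swap13:
  assumes "cochain3 \<gamma>"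
  shows "\<gamma> X Y Z = - \<gamma> Z Y X"
  using assms by (intro bilin_antisym[of "\<lambda>X Z. \<gamma> X Y Z"]) (auto simp: cochain3_def bilin_def)

lemma cochain3_rotate:
  assumes "cochain3 \<gamma>"
  shows "\<gamma> X Y Z = \<gamma> Z X Y"
  using cochain3_swap12[OF assms] cochain3_swap13[OF assms] by (metis minus_minus)

lemma cochain3_zero_left [simp]:
  assumes "cochain3 \<gamma>"
  shows "\<gamma> 0 Y Z = 0"
  using assms linear_0[of "\<lambda>X. \<gamma> X Y Z"] unfolding cochain3_def by blast

lemma bform_commute:
  assumes "\<forall>i<n. \<forall>j<n. Q i j = Q j i"
  shows "bform n Q v w = bform n Q w v"
  unfolding bform_def
  by (subst sum.swap) (use assms in \<open>auto intro!: sum.cong simp: ac_simps\<close>)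

lemma bform_vzero_right [simp]: "bform n Q v vzero = 0"
  by (simp add: bform_def vzero_def)

lemma bform_vzero_left [simp]: "bform n Q vzero v = 0"
  by (simp add: bform_def vzero_def)

lemma bform_uminus_left: "bform n Q (\<lambda>i. - v i) w = - bform n Q v w"
  by (simp add: bform_def sum_negf)

lemma bform_uminus_right: "bform n Q v (\<lambda>i. - w i) = - bform n Q v w"
  by (simp add: bform_def sum_negf)

lemma bform_diff_right: "bform n Q v (\<lambda>i. u i - w i) = bform n Q v u - bform n Q v w"
  by (simp add: bform_def algebra_simps sum_subtractf)

lemma linear_bform_right:
  assumes "\<And>j. linear (\<lambda>X. w X j)"
  shows "linear (\<lambda>X. bform n Q A (w X))"
proof (rule linearI)
  fix b1 b2
  have "w (b1 + b2) j = w b1 j + w b2 j" for j using linear_add[OF assms] by simp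
  then show "bform n Q A (w (b1 + b2)) = bform n Q A (w b1) + bform n Q A (w b2)"
    by (simp add: bform_def algebra_simps sum.distrib)
next
  fix r b
  have "w (r *\<^sub>R b) j = r * w b j" for j using linear_scale[OF assms] by simp
  then show "bform n Q A (w (r *\<^sub>R b)) = r *\<^sub>R bform n Q A (w b)"
    by (simp add: bform_def algebra_simps sum_distrib_left)
qed

lemma bracket_in_lcs2: "br x y \<in> lcs br 2"
  by (auto simp: numeral_2_eq_2 intro: span_base)

lemma lcs_eq_zero_Suc:
  assumes "bilin br" "lcs br m = {0}"
  shows "lcs br (Suc m) = {0}"
proof (cases m)
  case (Suc k)
  have "br x 0 = 0" for x
    using assms(1) linear_0[of "\<lambda>y. br x y"] unfolding bilin_def by blast
  then have "{br x y | x y. y \<in> lcs br (Suc k)} = {0}"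
    using assms(2) Suc by auto
  then show ?thesis using Suc by simp
qed (use assms in simp)

lemma lcs_eq_zero_add:
  assumes "bilin br" "lcs br m = {0}"
  shows "lcs br (m + j) = {0}"
  by (induction j) (simp_all add: assms lcs_eq_zero_Suc)

lemma lsub_1: "lsub br n R 1 = lie_center br \<inter> lcs br 2"
  by (simp add: lsub_def numeral_2_eq_2)

lemma lie_admissible_cond_A:
  assumes "lie_algebra br" "lie_nilpotent br" "lie_admissible br"
  obtains n Q R \<alpha> \<gamma> where "orth_module br n Q R" "quad_cocycle br n Q R \<alpha> \<gamma>"
    "\<forall>X Y. \<alpha> X Y \<in> mod_invariants n R" "\<And>k. cond_A br n Q R \<alpha> \<gamma> k"
proof -
  obtain n Q R \<alpha> \<gamma> where props: "orth_module br n Q R" "quad_cocycle br n Q R \<alpha> \<gamma>"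
      "\<forall>X Y. \<alpha> X Y \<in> mod_invariants n R"
    and adm: "\<forall>m. lcs br (m + 2) = {0} \<longrightarrow> (\<forall>k\<le>m. cond_A br n Q R \<alpha> \<gamma> k \<and> cond_B br n Q \<alpha> k)"
    using assms(3) unfolding lie_admissible_def by blast
  obtain m where m: "lcs br m = {0}" using assms(2) unfolding lie_nilpotent_def by blast
  have "cond_A br n Q R \<alpha> \<gamma> k" for k
  proof -
    have "lcs br ((k + m) + 2) = {0}"
      using lcs_eq_zero_add[OF _ m, of "k + 2"] assms(1)
      by (simp add: lie_algebra_def add.commute add.left_commute)
    then show ?thesis using adm by auto
  qed
  with props that show thesis by blast
qed

definition centralizer :: "('l \<Rightarrow> 'l \<Rightarrow> 'l::zero) \<Rightarrow> 'l set \<Rightarrow> 'l set" where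
  "centralizer br S = {L. \<forall>x\<in>S. br L x = 0}"

locale invariant_quad_cocycle_2step =
  fixes br :: "'l::real_vector \<Rightarrow> 'l \<Rightarrow> 'l"
    and n Q R \<alpha> \<gamma> and Lbar :: "'l set"
  assumes lie: "lie_algebra br"
    and lcs2_central: "lcs br 2 \<subseteq> lie_center br"
    and orth: "orth_module br n Q R"
    and cocycle: "quad_cocycle br n Q R \<alpha> \<gamma>"
    and invariant: "\<forall>X Y. \<alpha> X Y \<in> mod_invariants n R"
    and generates: "span {br x y | x y. x \<in> Lbar \<and> y \<in> Lbar} = lcs br 2"
begin

lemma bracket_antisym: "br x y = - br y x"
  using lie bilin_antisym unfolding lie_algebra_def by blast

lemma bracket_lcs2_right [simp]: "W \<in> lcs br 2 \<Longrightarrow> br x W = 0"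
  using lcs2_central unfolding lie_center_def by auto

lemma bracket_lcs2_left [simp]: "W \<in> lcs br 2 \<Longrightarrow> br W x = 0"
  using bracket_antisym[of W x] by simp

lemma bracket_bracket_right [simp]: "br x (br y z) = 0"
  by (rule bracket_lcs2_right[OF bracket_in_lcs2])

lemma centralizerD:
  assumes "L \<in> centralizer br S" "x \<in> S"
  shows "br L x = 0" and "br x L = 0"
proof -
  show "br L x = 0" using assms unfolding centralizer_def by blast
  then show "br x L = 0" using bracket_antisym[of x L] by simp
qed

lemma Q_sym: "\<forall>i<n. \<forall>j<n. Q i j = Q j i"
  using orth unfolding orth_module_def by blast

lemma cochain2: "cochain2 n \<alpha>" and cochain3: "cochain3 \<gamma>"
  and d3_eq: "d3 br \<gamma> X0 X1 X2 X3 = (1/2) * wedge22 n Q \<alpha> \<alpha> X0 X1 X2 X3"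
  using cocycle unfolding quad_cocycle_def by auto

lemma alpha_linear_left: "linear (\<lambda>X. \<alpha> X Y i)"
  using cochain2 unfolding cochain2_def bilin_def by blast

lemma alpha_antisym: "\<alpha> X Y i = - \<alpha> Y X i"
  using cochain2 by (intro bilin_antisym[of "\<lambda>X Y. \<alpha> X Y i"]) (auto simp: cochain2_def vzero_def)

lemma alpha_zero_left [simp]: "\<alpha> 0 Y i = 0"
  using linear_0[OF alpha_linear_left] by simp

lemma alpha_cocycle: "\<alpha> (br X Y) Z i - \<alpha> (br X Z) Y i + \<alpha> (br Y Z) X i = 0"
proof -
  have act0: "act n R X (\<alpha> Y Z) i = 0" for X Y Z
    using invariant unfolding mod_invariants_def vzero_def by (auto dest!: fun_cong)
  have "d2 br n R \<alpha> X Y Z i = vzero i"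
    using cocycle unfolding quad_cocycle_def by simp
  then show ?thesis by (simp add: d2_def act0 vzero_def)
qed

lemma linear_eq_0_on_lcs2:
  assumes "W \<in> lcs br 2" "linear f"
    and "\<And>x y. x \<in> Lbar \<Longrightarrow> y \<in> Lbar \<Longrightarrow> f (br x y) = 0"
  shows "f W = 0"
proof (rule linear_eq_0_on_span[OF assms(2)])
  show "W \<in> span {br x y | x y. x \<in> Lbar \<and> y \<in> Lbar}"
    using assms(1) generates by simp
qed (use assms(3) in blast)

lemma alpha_lcs2_centralizer:
  assumes "W \<in> lcs br 2" "M \<in> centralizer br Lbar"
  shows "\<alpha> W M = vzero" and "\<alpha> M W = vzero"
proof -
  have "\<alpha> W M i = 0" for i
  proof (rule linear_eq_0_on_lcs2[OF assms(1) alpha_linear_left])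
    fix x y assume "x \<in> Lbar" "y \<in> Lbar"
    then show "\<alpha> (br x y) M i = 0"
      using alpha_cocycle[of x y M i] centralizerD[OF assms(2)] by simp
  qed
  then show "\<alpha> W M = vzero" "\<alpha> M W = vzero"
    using alpha_antisym[of M W] by (simp_all add: vzero_def fun_eq_iff)
qed

context
  fixes L1 L2 assumes L1: "L1 \<in> centralizer br Lbar" and L2: "L2 \<in> centralizer br Lbar"
begin

lemma alpha_bracket_centralizers: "\<alpha> L (br L1 L2) = vzero"
proof -
  have "\<alpha> (br L1 L2) L i = 0" for i
    using alpha_cocycle[of L1 L2 L i] alpha_lcs2_centralizer(1)[OF bracket_in_lcs2 L1]
      alpha_lcs2_centralizer(1)[OF bracket_in_lcs2 L2]
    by (simp add: vzero_def)
  then show ?thesis using alpha_antisym[of L "br L1 L2"] by (simp add: vzero_def fun_eq_iff)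
qed

lemma gamma_bracket_centralizers:
  assumes x: "x \<in> Lbar" and W: "W \<in> lcs br 2"
  shows "\<gamma> (br L1 L2) x W = - bform n Q (\<alpha> L1 L2) (\<alpha> x W)"
proof -
  have "d3 br \<gamma> L1 L2 x W = - \<gamma> (br L1 L2) x W"
    unfolding d3_def using centralizerD[OF L1 x] centralizerD[OF L2 x] W cochain3 by simp
  moreover have "wedge22 n Q \<alpha> \<alpha> L1 L2 x W = 2 * bform n Q (\<alpha> L1 L2) (\<alpha> x W)"
    unfolding wedge22_def
    using alpha_lcs2_centralizer(2)[OF W L1] alpha_lcs2_centralizer(2)[OF W L2]
      bform_commute[OF Q_sym, of "\<alpha> x W" "\<alpha> L1 L2"]
    by simp
  ultimately show ?thesis using d3_eq[of L1 L2 x W] by linarith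
qed

lemma gamma_generator_bracket_centralizers:
  assumes x: "x \<in> Lbar" and y: "y \<in> Lbar"
  shows "\<gamma> (br x y) L (br L1 L2) + bform n Q (\<alpha> L1 L2) (\<alpha> (br x y) L) = 0"
proof -
  let ?L0 = "br L1 L2" and ?A = "\<alpha> L1 L2"
  have "wedge22 n Q \<alpha> \<alpha> x y L ?L0 = 0"
    unfolding wedge22_def using alpha_bracket_centralizers by simp
  moreover have "d3 br \<gamma> x y L ?L0 = - \<gamma> (br x y) L ?L0 + \<gamma> (br x L) y ?L0 - \<gamma> (br y L) x ?L0"
    unfolding d3_def using cochain3 by simp
  moreover have "\<gamma> (br z L) z' ?L0 = bform n Q ?A (\<alpha> z' (br z L))" if "z' \<in> Lbar" for z z'
    using gamma_bracket_centralizers[OF that bracket_in_lcs2]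
      cochain3_swap13[OF cochain3, of "br z L" z' ?L0]
    by simp
  ultimately have "\<gamma> (br x y) L ?L0 = bform n Q ?A (\<alpha> y (br x L)) - bform n Q ?A (\<alpha> x (br y L))"
    using d3_eq[of x y L ?L0] x y by simp
  also have "\<dots> = bform n Q ?A (\<lambda>i. - \<alpha> (br x y) L i)"
  proof -
    have "\<alpha> y (br x L) i - \<alpha> x (br y L) i = - \<alpha> (br x y) L i" for i
      using alpha_cocycle[of x y L i] alpha_antisym[of y "br x L" i] alpha_antisym[of x "br y L" i]
      by linarith
    then show ?thesis by (subst bform_diff_right[symmetric]) simp
  qed
  finally show ?thesis by (simp add: bform_uminus_right)
qed

lemma gamma_lcs2_bracket_centralizers:
  assumes W: "W \<in> lcs br 2"
  shows "\<gamma> W L (br L1 L2) = - bform n Q (\<alpha> L1 L2) (\<alpha> W L)"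
proof -
  have "\<gamma> W L (br L1 L2) + bform n Q (\<alpha> L1 L2) (\<alpha> W L) = 0"
  proof (rule linear_eq_0_on_lcs2[OF W])
    show "linear (\<lambda>W. \<gamma> W L (br L1 L2) + bform n Q (\<alpha> L1 L2) (\<alpha> W L))"
      by (intro linear_compose_add linear_bform_right alpha_linear_left)
        (use cochain3 in \<open>simp add: cochain3_def\<close>)
  next
    fix x y assume "x \<in> Lbar" "y \<in> Lbar"
    then show "\<gamma> (br x y) L (br L1 L2) + bform n Q (\<alpha> L1 L2) (\<alpha> (br x y) L) = 0"
      by (rule gamma_generator_bracket_centralizers)
  qed
  then show ?thesis by simp
qed

lemma bracket_centralizers_eq_0:
  assumes "cond_A br n Q R \<alpha> \<gamma> 1"
  shows "br L1 L2 = 0"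
proof -
  let ?L0 = "br L1 L2" and ?A0 = "\<lambda>i. - \<alpha> L1 L2 i"
  have "?L0 \<in> lsub br n R 1"
    using lsub_1 bracket_in_lcs2 lcs2_central by blast
  moreover have "\<exists>A0 \<in> vsp n. \<exists>Z0. lin_on (lcs br (1 + 1)) Z0 \<and> (\<forall>L. \<alpha> L ?L0 = vzero) \<and>
      (\<forall>L. \<forall>X \<in> lcs br (1 + 1). \<gamma> L ?L0 X = - bform n Q A0 (\<alpha> L X) + Z0 (br L X))"
  proof (intro bexI[of _ ?A0] exI[of _ "\<lambda>_. 0"] conjI allI ballI)
    have "\<alpha> L1 L2 \<in> vsp n" using cochain2 unfolding cochain2_def by blast
    then show "?A0 \<in> vsp n" unfolding vsp_def by simp
    show "lin_on (lcs br (1 + 1)) (\<lambda>_. 0)" unfolding lin_on_def by simp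
    show "\<alpha> L ?L0 = vzero" for L by (rule alpha_bracket_centralizers)
    fix L X assume "X \<in> lcs br (1 + 1)"
    then have X: "X \<in> lcs br 2" by (simp only: one_add_one)
    have "\<alpha> X L = (\<lambda>i. - \<alpha> L X i)" by (rule ext) (rule alpha_antisym)
    then show "\<gamma> L ?L0 X = - bform n Q ?A0 (\<alpha> L X) + 0"
      using cochain3_rotate[OF cochain3, of L ?L0 X] gamma_lcs2_bracket_centralizers[OF X]
      by (simp add: bform_uminus_left bform_uminus_right)
  qed
  ultimately show ?thesis using assms unfolding cond_A_def by blast
qed

end

end

theorem lemma4:
  fixes br :: "'l::euclidean_space \<Rightarrow> 'l \<Rightarrow> 'l"
    and Lbar :: "'l set"
  assumes "lie_algebra br"
    and "lie_nilpotent br"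
    and "dim (lcs br 2) = 2"
    and "lcs br 2 \<subseteq> lie_center br"
    and "lie_admissible br"
    and "subspace Lbar" and "dim Lbar = 3"
    and "span {br x y | x y. x \<in> Lbar \<and> y \<in> Lbar} = lcs br 2"
  shows "\<forall>L1 L2. (\<forall>x\<in>Lbar. br L1 x = 0) \<and> (\<forall>x\<in>Lbar. br L2 x = 0) \<longrightarrow> br L1 L2 = 0"
proof (intro allI impI)
  fix L1 L2
  assume "(\<forall>x\<in>Lbar. br L1 x = 0) \<and> (\<forall>x\<in>Lbar. br L2 x = 0)"
  then have L: "L1 \<in> centralizer br Lbar" "L2 \<in> centralizer br Lbar"
    unfolding centralizer_def by auto
  obtain n Q R \<alpha> \<gamma> where module: "orth_module br n Q R" "quad_cocycle br n Q R \<alpha> \<gamma>"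
    "\<forall>X Y. \<alpha> X Y \<in> mod_invariants n R" and A: "\<And>k. cond_A br n Q R \<alpha> \<gamma> k"
    using lie_admissible_cond_A[OF assms(1,2,5)] by metis
  interpret invariant_quad_cocycle_2step br n Q R \<alpha> \<gamma> Lbar
    by (intro invariant_quad_cocycle_2step.intro assms(1,4,8) module)
  show "br L1 L2 = 0" using bracket_centralizers_eq_0[OF L A] .
qed

end
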